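(* Let $g\in\mathcal{S}'(\mathbb{R})$ be supported in $[0,\infty)$ and let $a,b$ be constants. Suppose that, as $\lambda\to\infty$, $$g(\lambda x)=a\frac{\delta(x)}{\lambda}+b\frac{\log\lambda}{\lambda}\delta(x)+\frac{b}{\lambda}\operatorname{Pf}\left(\frac{H(x)}{x}\right)+o\left(\frac{1}{\lambda}\right)\quad\text{in }\mathcal{S}'(\mathbb{R}).$$ Then $$\mathcal{L}\{g;y\}=a-b\gamma+b\log\left(\frac{1}{y}\right)+o(1),\qquad y\to 0^+,$$ where $\gamma$ is Euler's constant.
   Context: $\delta$ is the Dirac delta and $H$ the Heaviside function (characteristic function of $[0,\infty)$). The distribution $\operatorname{Pf}(H(x)/x)$ is defined by $\langle \operatorname{Pf}(H(x)/x),\phi\rangle=\int_0^1\frac{\phi(x)-\phi(0)}{x}\,dx+\int_1^\infty\frac{\phi(x)}{x}\,dx$. For a distribution $g$, $g(\lambda x)$ is the distribution $\phi\mapsto \lambda^{-1}\langle g(x),\phi(x/\lambda)\rangle$. An asymptotic relation "$g(\lambda x)=c_1(\lambda)g_1(x)+c_2(\lambda)g_2(x)+o(c_2(\lambda))$ in $\mathcal{S}'(\mathbb{R})$" means that for every $\phi\in\mathcal{S}(\mathbb{R})$, $\langle g(\lambda x),\phi(x)\rangle=c_1(\lambda)\langle g_1,\phi\rangle+c_2(\lambda)\langle g_2,\phi\rangle+o(c_2(\lambda))$. For $g\in\mathcal{S}'(\mathbb{R})$ supported in $[0,\infty)$, its Laplace transform is $\mathcal{L}\{g;y\}=\langle g(x),e^{-yx}\rangle$,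 $y>0$ (well defined since $g$ is supported in $[0,\infty)$). *)

theory Defs
  imports "HOL-Analysis.Analysis"
begin

fun nderiv :: "nat \<Rightarrow> (real \<Rightarrow> complex) \<Rightarrow> real \<Rightarrow> complex" where
  "nderiv 0 f = f"
| "nderiv (Suc k) f = (\<lambda>x. vector_derivative (nderiv k f) (at x))"

definition schwartz :: "(real \<Rightarrow> complex) \<Rightarrow> bool" where
  "schwartz f \<longleftrightarrow>
     (\<forall>k x. nderiv k f differentiable (at x)) \<and>
     (\<forall>j k. \<exists>B. \<forall>x. (1 + \<bar>x\<bar>) ^ j * norm (nderiv k f x) \<le> B)"

text \<open>Tempered distributions: linear functionals on S(R), continuous for the
  Schwartz topology, i.e. bounded by a constant times a finite maximum of the
  seminorms sup_x (1+|x|)^j |f^(k)(x)|, j,k <= N.\<close>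
definition tempered :: "((real \<Rightarrow> complex) \<Rightarrow> complex) \<Rightarrow> bool" where
  "tempered T \<longleftrightarrow>
     (\<forall>f g. schwartz f \<longrightarrow> schwartz g \<longrightarrow> T (\<lambda>x. f x + g x) = T f + T g) \<and>
     (\<forall>c f. schwartz f \<longrightarrow> T (\<lambda>x. c * f x) = c * T f) \<and>
     (\<exists>C N. \<forall>f B. schwartz f \<longrightarrow>
         (\<forall>j\<le>N. \<forall>k\<le>N. \<forall>x. (1 + \<bar>x\<bar>) ^ j * norm (nderiv k f x) \<le> B) \<longrightarrow>
         norm (T f) \<le> C * B)"

text \<open>supp T \<subseteq> [0,\<infinity>): T vanishes on every test function whose (compact) support
  lies in the open set (-\<infinity>,0).\<close>
definition supported_nonneg :: "((real \<Rightarrow> complex) \<Rightarrow> complex) \<Rightarrow> bool" where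
  "supported_nonneg T \<longleftrightarrow>
     (\<forall>f. schwartz f \<longrightarrow> compact (closure {x. f x \<noteq> 0}) \<longrightarrow>
          closure {x. f x \<noteq> 0} \<subseteq> {..<0} \<longrightarrow> T f = 0)"

text \<open>Dilation: <g(lambda x), phi> = lambda^{-1} <g, phi(x/lambda)>.\<close>
definition dilate :: "((real \<Rightarrow> complex) \<Rightarrow> complex) \<Rightarrow> real \<Rightarrow> (real \<Rightarrow> complex) \<Rightarrow> complex" where
  "dilate T l f = T (\<lambda>x. f (x / l)) / complex_of_real l"

definition dirac :: "(real \<Rightarrow> complex) \<Rightarrow> complex" where
  "dirac f = f 0"

definition pf_H_over_x :: "(real \<Rightarrow> complex) \<Rightarrow> complex" where
  "pf_H_over_x f =
     set_lebesgue_integral lborel {0<..1} (\<lambda>x. (f x - f 0) / complex_of_real x)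
   + set_lebesgue_integral lborel {1..} (\<lambda>x. f x / complex_of_real x)"

text \<open>A fixed smooth cutoff equal to 1 on [0,\<infinity>) and 0 on (-\<infinity>,-1].\<close>
definition smooth_step_aux :: "real \<Rightarrow> real" where
  "smooth_step_aux t = (if t > 0 then exp (- 1 / t) else 0)"

definition cutoff :: "real \<Rightarrow> real" where
  "cutoff x = smooth_step_aux (x + 1) / (smooth_step_aux (x + 1) + smooth_step_aux (- x))"

text \<open>Laplace transform of a distribution supported in [0,\<infinity>):
  L{g;y} = <g(x), e^{-yx}>, realised as <g, cutoff(x) e^{-yx}> (independent of the cutoff
  by the support condition).\<close>
definition laplace :: "((real \<Rightarrow> complex) \<Rightarrow> complex) \<Rightarrow> real \<Rightarrow> complex" where
  "laplace T y = T (\<lambda>x. complex_of_real (cutoff x * exp (- y * x)))"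

end

theory Submission
  imports Defs "HOL-Computational_Algebra.Polynomial" "HOL-Real_Asymp.Real_Asymp"
begin

text \<open>Put \<open>\<psi>(x) = cutoff(x) exp(-x)\<close>. Since \<open>g\<close> is supported in \<open>[0,\<infinity>)\<close>,
  \<open>L{g;1/\<lambda>} = <g(x), \<psi>(x/\<lambda>)> = \<lambda> <g(\<lambda>x), \<psi>>\<close>: in the Laplace transform the exponential
  \<open>exp(-x/\<lambda>)\<close> may be cut off by \<open>\<psi>(x/\<lambda>)\<close> instead of \<open>cutoff(x)\<close>. Indeed the difference
  vanishes on \<open>[0,\<infinity>)\<close>, hence is flat at 0, so cutting it off at distance \<open>\<epsilon>\<close> from 0 changes
  it only by \<open>O(\<epsilon>)\<close> in every Schwartz seminorm, and the cut-off function is supported in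
  \<open>(-\<infinity>,0)\<close>. The hypothesis then gives \<open>L{g;y} = a + b log(1/y) + b <Pf(H(x)/x), \<psi>> + o(1)\<close>,
  and \<open><Pf(H(x)/x), \<psi>>\<close> is the limit of \<open>\<Gamma>(s) - 1/s\<close> as \<open>s \<rightarrow> 0+\<close>, i.e. \<open>-\<gamma>\<close>, by dominated
  convergence in the integral representation of \<open>\<Gamma>\<close>.\<close>

section \<open>Smooth functions\<close>

definition smooth :: "(real \<Rightarrow> complex) \<Rightarrow> bool" where
  "smooth f \<longleftrightarrow> (\<forall>k x. nderiv k f differentiable (at x))"

definition differentiable_upto :: "nat \<Rightarrow> (real \<Rightarrow> complex) \<Rightarrow> bool" where
  "differentiable_upto k f \<longleftrightarrow> (\<forall>j\<le>k. \<forall>x. nderiv j f differentiable (at x))"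

lemma nderiv_nderiv: "nderiv k (nderiv m f) = nderiv (k + m) f"
  by (induction k) auto

lemma nderiv_Suc': "nderiv (Suc k) f = nderiv k (nderiv (Suc 0) f)"
  using nderiv_nderiv[of k "Suc 0" f] by simp

lemma smooth_iff_differentiable_upto: "smooth f \<longleftrightarrow> (\<forall>k. differentiable_upto k f)"
  unfolding smooth_def differentiable_upto_def by auto

lemma differentiable_upto_0: "differentiable_upto 0 f \<longleftrightarrow> (\<forall>x. f differentiable (at x))"
  unfolding differentiable_upto_def by auto

lemma differentiable_upto_Suc:
  "differentiable_upto (Suc k) f \<longleftrightarrow>
     (\<forall>x. f differentiable (at x)) \<and> differentiable_upto k (nderiv (Suc 0) f)"
proof -
  have "differentiable_upto (Suc k) f \<longleftrightarrow> (\<forall>x. nderiv 0 f differentiable (at x)) \<and>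
          (\<forall>j\<le>k. \<forall>x. nderiv (Suc j) f differentiable (at x))"
    unfolding differentiable_upto_def
    by (auto simp del: nderiv.simps) (metis not0_implies_Suc Suc_le_mono)
  then show ?thesis unfolding differentiable_upto_def nderiv_Suc'[symmetric] by simp
qed

lemma differentiable_upto_mono: "j \<le> k \<Longrightarrow> differentiable_upto k f \<Longrightarrow> differentiable_upto j f"
  unfolding differentiable_upto_def by auto

lemma differentiable_upto_const: "differentiable_upto k (\<lambda>x. c)"
  by (induction k arbitrary: c) (simp_all add: differentiable_upto_0 differentiable_upto_Suc)

lemma differentiable_upto_add:
  "differentiable_upto k f \<Longrightarrow> differentiable_upto k g \<Longrightarrow> differentiable_upto k (\<lambda>x. f x + g x)"
proof (induction k arbitrary: f g)
  case 0 then show ?case by (auto simp: differentiable_upto_0)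
next
  case (Suc k)
  then have "\<And>x. f differentiable (at x)" "\<And>x. g differentiable (at x)"
    by (auto simp: differentiable_upto_Suc)
  then show ?case using Suc by (auto simp: differentiable_upto_Suc)
qed

lemma differentiable_upto_diff:
  "differentiable_upto k f \<Longrightarrow> differentiable_upto k g \<Longrightarrow> differentiable_upto k (\<lambda>x. f x - g x)"
proof (induction k arbitrary: f g)
  case 0 then show ?case by (auto simp: differentiable_upto_0)
next
  case (Suc k)
  then have "\<And>x. f differentiable (at x)" "\<And>x. g differentiable (at x)"
    by (auto simp: differentiable_upto_Suc)
  then show ?case using Suc by (auto simp: differentiable_upto_Suc)
qed

lemma differentiable_upto_mult:
  "differentiable_upto k f \<Longrightarrow> differentiable_upto k g \<Longrightarrow> differentiable_upto k (\<lambda>x. f x * g x)"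
proof (induction k arbitrary: f g)
  case 0 then show ?case by (auto simp: differentiable_upto_0)
next
  case (Suc k)
  have d: "\<And>x. f differentiable (at x)" "\<And>x. g differentiable (at x)"
    using Suc.prems by (auto simp: differentiable_upto_Suc)
  have "differentiable_upto k f" "differentiable_upto k g"
    using Suc.prems differentiable_upto_mono[of k "Suc k"] by auto
  moreover have "differentiable_upto k (nderiv (Suc 0) f)" "differentiable_upto k (nderiv (Suc 0) g)"
    using Suc.prems by (auto simp: differentiable_upto_Suc)
  ultimately have "differentiable_upto k
      (\<lambda>x. f x * nderiv (Suc 0) g x + nderiv (Suc 0) f x * g x)"
    by (intro differentiable_upto_add Suc.IH)
  then show ?case using d by (auto simp: differentiable_upto_Suc)
qed

lemma smooth_add: "smooth f \<Longrightarrow> smooth g \<Longrightarrow> smooth (\<lambda>x. f x + g x)"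
  by (simp add: smooth_iff_differentiable_upto differentiable_upto_add)

lemma smooth_diff: "smooth f \<Longrightarrow> smooth g \<Longrightarrow> smooth (\<lambda>x. f x - g x)"
  by (simp add: smooth_iff_differentiable_upto differentiable_upto_diff)

lemma smooth_mult: "smooth f \<Longrightarrow> smooth g \<Longrightarrow> smooth (\<lambda>x. f x * g x)"
  by (simp add: smooth_iff_differentiable_upto differentiable_upto_mult)

lemma smooth_nderiv: "smooth f \<Longrightarrow> smooth (nderiv k f)"
  unfolding smooth_def nderiv_nderiv by blast

lemma smooth_has_vector_derivative:
  "smooth f \<Longrightarrow> (nderiv k f has_vector_derivative nderiv (Suc k) f x) (at x)"
  unfolding smooth_def by (simp add: vector_derivative_works[symmetric])

lemma smooth_inverse:
  assumes "smooth h" "\<And>x. h x \<noteq> 0"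
  shows "smooth (\<lambda>x. inverse (h x))"
proof -
  have dh: "(h has_vector_derivative nderiv (Suc 0) h x) (at x)" for x
    using smooth_has_vector_derivative[OF assms(1), of 0] by simp
  have hd: "((\<lambda>x. inverse (h x)) has_vector_derivative
      - (inverse (h x) * nderiv (Suc 0) h x * inverse (h x))) (at x)" for x
    using field_vector_diff_chain_at[OF dh DERIV_inverse[OF assms(2)[of x]]]
    by (simp add: o_def power2_eq_square mult.commute mult.left_commute)
  then have d1: "nderiv (Suc 0) (\<lambda>x. inverse (h x)) =
      (\<lambda>x. (0 - inverse (h x) * nderiv (Suc 0) h x) * inverse (h x))"
    by (simp add: vector_derivative_at fun_eq_iff)
  have h': "differentiable_upto k (nderiv (Suc 0) h)" for k
    using smooth_nderiv[OF assms(1)] smooth_iff_differentiable_upto by blast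
  have "differentiable_upto k (\<lambda>x. inverse (h x))" for k
  proof (induction k)
    case 0 then show ?case using hd by (auto simp: differentiable_upto_0 intro: differentiableI_vector)
  next
    case (Suc k)
    then have "differentiable_upto k (nderiv (Suc 0) (\<lambda>x. inverse (h x)))"
      unfolding d1 using h'
      by (intro differentiable_upto_mult differentiable_upto_diff differentiable_upto_const)
    then show ?case using hd by (auto simp: differentiable_upto_Suc intro: differentiableI_vector)
  qed
  then show ?thesis by (simp add: smooth_iff_differentiable_upto)
qed

lemma nderiv_diff:
  assumes "smooth f" "smooth g"
  shows "nderiv k (\<lambda>x. f x - g x) = (\<lambda>x. nderiv k f x - nderiv k g x)"
proof (induction k)
  case (Suc k)
  show ?case
    by (simp only: nderiv.simps Suc, rule ext, rule vector_derivative_at,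
        intro has_vector_derivative_diff smooth_has_vector_derivative[simplified] assms)
qed simp

lemma nderiv_const: "nderiv k (\<lambda>x. c) = (\<lambda>x. if k = 0 then c else 0)"
  by (induction k) simp_all

lemma nderiv_cong_open:
  assumes "open U" "\<And>x. x \<in> U \<Longrightarrow> f x = g x" "x \<in> U"
  shows "nderiv k f x = nderiv k g x"
  using assms(3)
proof (induction k arbitrary: x)
  case (Suc k)
  have "eventually (\<lambda>y. nderiv k f y = nderiv k g y) (nhds x)"
    using eventually_nhds_in_open[OF assms(1) Suc.prems] by (rule eventually_mono) (use Suc.IH in auto)
  then show ?case by (simp, intro vector_derivative_cong_eq) auto
qed (use assms in simp)

lemma has_vector_derivative_nderiv_affine:
  assumes "smooth f"
  shows "((\<lambda>x. nderiv k f (a * x + b)) has_vector_derivative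
           of_real a * nderiv (Suc k) f (a * x + b)) (at x)"
proof -
  have "((\<lambda>x. a * x + b) has_vector_derivative a) (at x)"
    by (auto intro!: derivative_eq_intros
        simp: has_real_derivative_iff_has_vector_derivative[symmetric])
  from vector_diff_chain_at[OF this smooth_has_vector_derivative[OF assms]]
  show ?thesis by (simp add: o_def scaleR_conv_of_real)
qed

lemma nderiv_affine:
  assumes "smooth f"
  shows "nderiv k (\<lambda>x. f (a * x + b)) = (\<lambda>x. of_real a ^ k * nderiv k f (a * x + b))"
proof (induction k)
  case (Suc k)
  have "((\<lambda>x. of_real a ^ k * nderiv k f (a * x + b)) has_vector_derivative
          of_real a ^ Suc k * nderiv (Suc k) f (a * x + b)) (at x)" for x
    using has_vector_derivative_mult_right[OF has_vector_derivative_nderiv_affine[OF assms],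
        of "of_real a ^ k"]
    by (simp add: mult.assoc mult.left_commute)
  then show ?case
    by (simp only: nderiv.simps Suc) (rule ext, rule vector_derivative_at, simp)
qed simp

lemma smooth_affine:
  assumes "smooth f"
  shows "smooth (\<lambda>x. f (a * x + b))"
proof -
  have "(\<lambda>x. of_real a ^ k * nderiv k f (a * x + b)) differentiable (at x)" for k x
    by (intro differentiable_mult differentiable_const
        differentiableI_vector[OF has_vector_derivative_nderiv_affine[OF assms]])
  then show ?thesis unfolding smooth_def nderiv_affine[OF assms] by blast
qed

lemma has_vector_derivative_of_real_exp:
  "((\<lambda>x. of_real c ^ k * complex_of_real (exp (c * x))) has_vector_derivative
     of_real c ^ Suc k * complex_of_real (exp (c * x))) (at x)"
  by (auto intro!: derivative_eq_intros has_vector_derivative_of_real simp: algebra_simps)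

lemma nderiv_exp:
  "nderiv k (\<lambda>x. complex_of_real (exp (c * x))) = (\<lambda>x. of_real c ^ k * of_real (exp (c * x)))"
proof (induction k)
  case (Suc k)
  then show ?case
    by (simp only: nderiv.simps Suc)
       (rule ext, rule vector_derivative_at, rule has_vector_derivative_of_real_exp)
qed simp

lemma smooth_exp: "smooth (\<lambda>x. complex_of_real (exp (c * x)))"
  unfolding smooth_def nderiv_exp
  by (blast intro: differentiableI_vector has_vector_derivative_of_real_exp)

lemma nderiv_mult:
  assumes f: "smooth f" and g: "smooth g"
  shows "nderiv n (\<lambda>x. f x * g x) =
    (\<lambda>x. \<Sum>i = 0..n. of_nat (n choose i) * nderiv i f x * nderiv (n - i) g x)"
proof (induction n)
  case (Suc n)
  have "(\<Sum>i = 0..n. of_nat (n choose i) *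
          (nderiv i f x * nderiv (Suc (n - i)) g x + nderiv (Suc i) f x * nderiv (n - i) g x)) =
       (\<Sum>i = 0..Suc n. of_nat (Suc n choose i) * nderiv i f x * nderiv (Suc n - i) g x)"
    (is "?lhs = ?rhs") for x
  proof -
    have Suc_choose: "Suc n choose k = (n choose k) + (if k = 0 then 0 else n choose (k - 1))" for k
      by (cases k) simp_all
    have "?lhs = nderiv (Suc n) f x * g x +
        (\<Sum>i = 0..n. nderiv i f x * (of_nat (Suc n choose i) * nderiv (Suc n - i) g x))"
      apply (simp add: Suc_choose algebra_simps sum.distrib)
      apply (subst (4) sum_Suc_reindex)
      apply (auto simp: algebra_simps Suc_diff_le intro: sum.cong)
      done
    then show ?thesis by (simp add: algebra_simps)
  qed
  moreover have "((\<lambda>x. \<Sum>i = 0..n. of_nat (n choose i) * nderiv i f x * nderiv (n - i) g x)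
      has_vector_derivative (\<Sum>i = 0..n. of_nat (n choose i) *
          (nderiv i f x * nderiv (Suc (n - i)) g x + nderiv (Suc i) f x * nderiv (n - i) g x))) (at x)"
    for x
    unfolding mult.assoc
    by (intro has_vector_derivative_sum has_vector_derivative_mult_right has_vector_derivative_mult
        smooth_has_vector_derivative f g)
  ultimately show ?case
    by (simp only: nderiv.simps Suc) (rule ext, rule vector_derivative_at, simp)
qed simp

lemma continuous_on_nderiv: "smooth f \<Longrightarrow> continuous_on S (nderiv k f)"
  unfolding smooth_def
  by (meson continuous_at_imp_continuous_on differentiable_imp_continuous_within)

lemma isCont_nderiv: "smooth f \<Longrightarrow> isCont (nderiv k f) x"
  unfolding smooth_def by (meson differentiable_imp_continuous_within)

section \<open>The cutoff function\<close>

lemma poly_times_power_div_exp_tendsto_0: "((\<lambda>u. u ^ n * poly P u / exp u) \<longlongrightarrow> (0::real)) at_top"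
proof (induction P arbitrary: n rule: pCons_induct)
  case (pCons a P)
  have "((\<lambda>u. a * (u ^ n / exp u) + u ^ Suc n * poly P u / exp u) \<longlongrightarrow> a * 0 + 0) at_top"
    by (intro tendsto_intros tendsto_power_div_exp_0 pCons.IH)
  then show ?case by (simp add: algebra_simps add_divide_distrib)
qed simp

text \<open>The derivatives of \<open>exp (-1/t)\<close> (extended by 0) are \<open>P (1/t) exp (-1/t)\<close> for
  polynomials \<open>P\<close>, again extended by 0.\<close>

definition flat_fun :: "real poly \<Rightarrow> real \<Rightarrow> real" where
  "flat_fun P t = (if t > 0 then poly P (1 / t) * exp (- 1 / t) else 0)"

definition flat_deriv_poly :: "real poly \<Rightarrow> real poly" where
  "flat_deriv_poly P = [:0, 0, 1:] * (P - pderiv P)"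

lemma has_real_derivative_flat_fun_0:
  "(flat_fun P has_real_derivative 0) (at 0)"
proof -
  have "((\<lambda>x. (flat_fun P (inverse x) - flat_fun P 0) / (inverse x - 0)) \<longlongrightarrow> 0) at_top"
    using poly_times_power_div_exp_tendsto_0[of 1 P]
  proof (rule Lim_transform_eventually)
    show "\<forall>\<^sub>F x in at_top. x ^ 1 * poly P x / exp x =
        (flat_fun P (inverse x) - flat_fun P 0) / (inverse x - 0)"
      using eventually_gt_at_top[of 0]
      by (rule eventually_mono) (auto simp: flat_fun_def exp_minus field_simps)
  qed
  then have "((\<lambda>y. (flat_fun P y - flat_fun P 0) / (y - 0)) \<longlongrightarrow> 0) (at_right 0)"
    by (simp add: filterlim_at_right_to_top)
  moreover have "((\<lambda>y. (flat_fun P y - flat_fun P 0) / (y - 0)) \<longlongrightarrow> 0) (at_left 0)"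
  proof (rule Lim_transform_eventually[OF tendsto_const])
    show "\<forall>\<^sub>F y in at_left 0. 0 = (flat_fun P y - flat_fun P 0) / (y - 0)"
      using eventually_at_left_real[of "-1" 0]
      by (rule eventually_mono) (auto simp: flat_fun_def)
  qed
  ultimately show ?thesis
    by (simp add: has_field_derivative_iff filterlim_at_split)
qed

lemma has_real_derivative_flat_fun:
  "(flat_fun P has_real_derivative flat_fun (flat_deriv_poly P) t) (at t)"
proof -
  consider "t > 0" | "t < 0" | "t = 0" by linarith
  then show ?thesis
  proof cases
    case 1
    have "((\<lambda>t. poly P (1 / t) * exp (- 1 / t)) has_real_derivative
        flat_fun (flat_deriv_poly P) t) (at t)"
      using 1
      by (auto intro!: derivative_eq_intros DERIV_chain2[OF poly_DERIV]
          simp: flat_fun_def flat_deriv_poly_def field_simps power2_eq_square)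
    then show ?thesis
      by (rule has_field_derivative_transform_within_open[of _ _ _ "{0<..}"])
        (use 1 in \<open>auto simp: flat_fun_def\<close>)
  next
    case 2
    have "((\<lambda>t. 0) has_real_derivative flat_fun (flat_deriv_poly P) t) (at t)"
      using 2 by (auto simp: flat_fun_def)
    then show ?thesis
      by (rule has_field_derivative_transform_within_open[of _ _ _ "{..<0}"])
        (use 2 in \<open>auto simp: flat_fun_def\<close>)
  next
    case 3
    then show ?thesis using has_real_derivative_flat_fun_0[of P] by (simp add: flat_fun_def)
  qed
qed

lemma nderiv_smooth_step_aux:
  "nderiv k (\<lambda>t. complex_of_real (smooth_step_aux t)) =
    (\<lambda>t. complex_of_real (flat_fun ((flat_deriv_poly ^^ k) 1) t))"
proof (induction k)
  case 0 then show ?case by (auto simp: flat_fun_def smooth_step_aux_def)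
next
  case (Suc k)
  have "((\<lambda>t. complex_of_real (flat_fun ((flat_deriv_poly ^^ k) 1) t)) has_vector_derivative
          complex_of_real (flat_fun ((flat_deriv_poly ^^ Suc k) 1) t)) (at t)" for t
    by (rule has_vector_derivative_of_real) (simp add: has_real_derivative_flat_fun)
  then show ?case by (simp only: nderiv.simps Suc) (rule ext, rule vector_derivative_at)
qed

lemma smooth_smooth_step_aux: "smooth (\<lambda>t. complex_of_real (smooth_step_aux t))"
  unfolding smooth_def nderiv_smooth_step_aux
  by (blast intro: differentiableI_vector has_vector_derivative_of_real has_real_derivative_flat_fun)

definition complex_cutoff :: "real \<Rightarrow> complex" where
  "complex_cutoff x = complex_of_real (cutoff x)"

lemma cutoff_eq_1: "x \<ge> 0 \<Longrightarrow> cutoff x = 1"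
  by (simp add: cutoff_def smooth_step_aux_def)

lemma cutoff_eq_0: "x \<le> -1 \<Longrightarrow> cutoff x = 0"
  by (simp add: cutoff_def smooth_step_aux_def)

lemma smooth_complex_cutoff: "smooth complex_cutoff"
proof -
  let ?S = "\<lambda>t. complex_of_real (smooth_step_aux t)"
  have "smooth (\<lambda>x. ?S (1 * x + 1) * inverse (?S (1 * x + 1) + ?S ((-1) * x + 0)))"
  proof (intro smooth_mult smooth_inverse smooth_add smooth_affine smooth_smooth_step_aux)
    fix x
    have "smooth_step_aux (x + 1) + smooth_step_aux (- x) > 0"
      by (cases "x > -1") (auto simp: smooth_step_aux_def add_pos_nonneg)
    then show "?S (1 * x + 1) + ?S (- 1 * x + 0) \<noteq> 0"
      by (simp flip: of_real_add)
  qed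
  then show ?thesis
    unfolding complex_cutoff_def cutoff_def by (simp add: divide_inverse)
qed

lemma nderiv_complex_cutoff_eq_0: "x < -1 \<Longrightarrow> nderiv m complex_cutoff x = 0"
  using nderiv_cong_open[of "{..<-1}" complex_cutoff "\<lambda>x. 0" x m]
  by (simp add: complex_cutoff_def cutoff_eq_0 nderiv_const)

lemma nderiv_complex_cutoff_bounded: "\<exists>K. \<forall>x. norm (nderiv m complex_cutoff x) \<le> K"
proof -
  obtain M where M: "\<And>x. x \<in> {-1..0} \<Longrightarrow> norm (nderiv m complex_cutoff x) \<le> M"
    using continuous_on_compact_bound[OF compact_Icc continuous_on_nderiv[OF smooth_complex_cutoff]]
    by metis
  have "norm (nderiv m complex_cutoff x) \<le> max M 1" for x
  proof -
    consider "x < -1" | "x \<in> {-1..0}" | "x > 0" by force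
    then show ?thesis
    proof cases
      case 3
      then have "nderiv m complex_cutoff x = nderiv m (\<lambda>x. 1) x"
        by (intro nderiv_cong_open[of "{0<..}"]) (auto simp: complex_cutoff_def cutoff_eq_1)
      then show ?thesis by (simp add: nderiv_const le_max_iff_disj)
    qed (use M nderiv_complex_cutoff_eq_0 in force)+
  qed
  then show ?thesis by blast
qed

section \<open>Schwartz functions\<close>

lemma schwartz_smooth: "schwartz f \<Longrightarrow> smooth f"
  unfolding schwartz_def smooth_def by blast

lemma schwartz_boundsE:
  assumes "schwartz f"
  obtains B where "\<And>j k x. (1 + \<bar>x\<bar>) ^ j * norm (nderiv k f x) \<le> B j k"
  using assms unfolding schwartz_def by metis

lemma schwartz_iff_smooth_bounds:
  "schwartz f \<longleftrightarrow> smooth f \<and> (\<forall>j k. \<exists>B. \<forall>x. (1 + \<bar>x\<bar>) ^ j * norm (nderiv k f x) \<le> B)"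
  unfolding schwartz_def smooth_def ..

lemma schwartz_diff:
  assumes "schwartz f" "schwartz g"
  shows "schwartz (\<lambda>x. f x - g x)"
proof -
  obtain Bf where Bf: "\<And>j k x. (1 + \<bar>x\<bar>) ^ j * norm (nderiv k f x) \<le> Bf j k"
    using schwartz_boundsE[OF assms(1)] by blast
  obtain Bg where Bg: "\<And>j k x. (1 + \<bar>x\<bar>) ^ j * norm (nderiv k g x) \<le> Bg j k"
    using schwartz_boundsE[OF assms(2)] by blast
  have "(1 + \<bar>x\<bar>) ^ j * norm (nderiv k f x - nderiv k g x) \<le> Bf j k + Bg j k" for j k x
  proof -
    have "(1 + \<bar>x\<bar>) ^ j * norm (nderiv k f x - nderiv k g x) \<le>
          (1 + \<bar>x\<bar>) ^ j * norm (nderiv k f x) + (1 + \<bar>x\<bar>) ^ j * norm (nderiv k g x)"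
      by (simp flip: distrib_left add: mult_left_mono norm_triangle_ineq4)
    then show ?thesis using Bf[of x j k] Bg[of x j k] by linarith
  qed
  moreover have "smooth f" "smooth g" using assms schwartz_smooth by auto
  ultimately show ?thesis
    unfolding schwartz_iff_smooth_bounds nderiv_diff[OF \<open>smooth f\<close> \<open>smooth g\<close>]
    by (blast intro: smooth_diff)
qed

lemma schwartz_mult:
  assumes f: "schwartz f" and g: "smooth g" and K: "\<And>m x. norm (nderiv m g x) \<le> K m"
  shows "schwartz (\<lambda>x. f x * g x)"
proof -
  obtain Bf where Bf: "\<And>j k x. (1 + \<bar>x\<bar>) ^ j * norm (nderiv k f x) \<le> Bf j k"
    using schwartz_boundsE[OF f] by blast
  have sf: "smooth f" using f schwartz_smooth by blast
  have "(1 + \<bar>x\<bar>) ^ j * norm (nderiv k (\<lambda>x. f x * g x) x) \<le>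
        (\<Sum>i = 0..k. of_nat (k choose i) * (Bf j i * K (k - i)))" for j k x
  proof -
    have "(1 + \<bar>x\<bar>) ^ j * norm (nderiv k (\<lambda>x. f x * g x) x) \<le>
        (1 + \<bar>x\<bar>) ^ j * (\<Sum>i = 0..k. norm (of_nat (k choose i) * nderiv i f x * nderiv (k - i) g x))"
      unfolding nderiv_mult[OF sf g] by (intro mult_left_mono norm_sum) auto
    also have "\<dots> = (\<Sum>i = 0..k. of_nat (k choose i) *
        (((1 + \<bar>x\<bar>) ^ j * norm (nderiv i f x)) * norm (nderiv (k - i) g x)))"
      by (simp add: sum_distrib_left norm_mult ac_simps)
    also have "\<dots> \<le> (\<Sum>i = 0..k. of_nat (k choose i) * (Bf j i * K (k - i)))"
      by (intro sum_mono mult_left_mono mult_mono Bf K) (auto intro: order_trans[OF _ Bf])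
    finally show ?thesis .
  qed
  then show ?thesis unfolding schwartz_iff_smooth_bounds using sf g by (blast intro: smooth_mult)
qed

lemma schwartz_exp_tail:
  assumes f: "smooth f" and c: "c > 0"
    and below: "\<And>x. x \<le> A \<Longrightarrow> f x = 0"
    and above: "\<And>x. x \<ge> B \<Longrightarrow> f x = complex_of_real (exp (- c * x))"
  shows "schwartz f"
proof -
  have "\<exists>M. \<forall>x. (1 + \<bar>x\<bar>) ^ j * norm (nderiv k f x) \<le> M" for j k
  proof -
    have "((\<lambda>x. c ^ k * ((1 + x) ^ j * exp (- c * x))) \<longlongrightarrow> c ^ k * 0) at_top"
      using c by (intro tendsto_intros) real_asymp
    then have "eventually (\<lambda>x. (1 + x) ^ j * (c ^ k * exp (- c * x)) < 1) at_top"
      by (simp add: order_tendstoD(2) ac_simps)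
    then obtain T where T: "\<And>x. x \<ge> T \<Longrightarrow> (1 + x) ^ j * (c ^ k * exp (- c * x)) < 1"
      by (auto simp: eventually_at_top_linorder)
    define T' where "T' = max (max B T) 0"
    have "continuous_on {A..T'} (\<lambda>x. (1 + \<bar>x\<bar>) ^ j * norm (nderiv k f x))"
      by (intro continuous_intros continuous_on_nderiv f)
    then obtain M where M: "\<And>x. x \<in> {A..T'} \<Longrightarrow> norm ((1 + \<bar>x\<bar>) ^ j * norm (nderiv k f x)) \<le> M"
      using continuous_on_compact_bound[OF compact_Icc] by blast
    have "(1 + \<bar>x\<bar>) ^ j * norm (nderiv k f x) \<le> max M 1" for x
    proof -
      consider "x < A" | "x \<in> {A..T'}" | "x > T'" by force
      then show ?thesis
      proof cases
        case 1
        then have "nderiv k f x = nderiv k (\<lambda>x. 0) x"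
          by (intro nderiv_cong_open[of "{..<A}"]) (auto simp: below)
        then show ?thesis by (simp add: nderiv_const)
      next
        case 2 then show ?thesis using M[of x] by simp
      next
        case 3
        then have "nderiv k f x = nderiv k (\<lambda>x. complex_of_real (exp ((- c) * x))) x"
          by (intro nderiv_cong_open[of "{B<..}"]) (auto simp: T'_def above)
        also have "\<dots> = of_real (- c) ^ k * of_real (exp (- c * x))"
          by (subst nderiv_exp) simp
        finally have "norm (nderiv k f x) = c ^ k * exp (- c * x)"
          using c by (simp add: norm_mult norm_power)
        moreover have "x \<ge> T" "x \<ge> 0" using 3 by (auto simp: T'_def)
        ultimately show ?thesis using T[of x] by simp
      qed
    qed
    then show ?thesis by blast
  qed
  then show ?thesis using f by (simp add: schwartz_iff_smooth_bounds)
qed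

section \<open>Test functions flat at the origin\<close>

lemma nderiv_eq_0_if_vanishes_nonneg:
  assumes f: "smooth f" and vanish: "\<And>x. x \<ge> 0 \<Longrightarrow> f x = 0" and x: "x \<ge> 0"
  shows "nderiv i f x = 0"
proof -
  have pos: "nderiv i f y = 0" if "y > 0" for y
    using nderiv_cong_open[of "{0<..}" f "\<lambda>x. 0" y i] that vanish by (simp add: nderiv_const)
  show ?thesis
  proof (cases "x > 0")
    case False
    then have x0: "x = 0" using x by simp
    have "(nderiv i f \<longlongrightarrow> nderiv i f 0) (at_right 0)"
      using isCont_nderiv[OF f, where k=i and x=0] by (simp add: isCont_def filterlim_at_split)
    moreover have "(nderiv i f \<longlongrightarrow> 0) (at_right 0)"
    proof (rule Lim_transform_eventually[OF tendsto_const])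
      show "\<forall>\<^sub>F y in at_right 0. 0 = nderiv i f y"
        using eventually_at_right_real[of 0 1] by (rule eventually_mono) (auto simp: pos)
    qed
    ultimately show ?thesis using x0 tendsto_unique[OF trivial_limit_at_right_real] by blast
  qed (use pos in blast)
qed

lemma norm_nderiv_flat_le:
  assumes f: "smooth f" and vanish: "\<And>x. x \<ge> 0 \<Longrightarrow> f x = 0"
    and bound: "\<And>n y. n \<le> i + m \<Longrightarrow> norm (nderiv n f y) \<le> M" and x: "x \<le> 0"
  shows "norm (nderiv i f x) \<le> M * \<bar>x\<bar> ^ m"
  using bound x
proof (induction m arbitrary: i x)
  case 0 then show ?case by simp
next
  case (Suc m)
  have M: "M \<ge> 0" using order_trans[OF norm_ge_zero Suc.prems(1)[of 0 0]] by simp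
  let ?B = "M * \<bar>x\<bar> ^ m"
  have "norm (nderiv i f x - nderiv i f 0) \<le> ?B * norm (x - 0)"
  proof (rule differentiable_bound[of "{x..0}" _ "\<lambda>t h. h *\<^sub>R nderiv (Suc i) f t"])
    fix t assume t: "t \<in> {x..0}"
    show "(nderiv i f has_derivative (\<lambda>h. h *\<^sub>R nderiv (Suc i) f t)) (at t within {x..0})"
      using smooth_has_vector_derivative[OF f, of i t] unfolding has_vector_derivative_def
      by (rule has_derivative_at_withinI)
    have "onorm (\<lambda>h. h *\<^sub>R nderiv (Suc i) f t) = norm (nderiv (Suc i) f t)"
      using onorm_scaleR_left[OF bounded_linear_ident, of "nderiv (Suc i) f t"] onorm_id[where 'a=real]
      by simp
    also have "\<dots> \<le> M * \<bar>t\<bar> ^ m" using t Suc.prems by (intro Suc.IH) auto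
    also have "\<dots> \<le> ?B" using t M by (intro mult_left_mono power_mono) auto
    finally show "onorm (\<lambda>h. h *\<^sub>R nderiv (Suc i) f t) \<le> ?B" .
  qed (use Suc.prems in auto)
  moreover have "nderiv i f 0 = 0" by (rule nderiv_eq_0_if_vanishes_nonneg[OF f vanish order_refl])
  ultimately show ?case by (simp add: algebra_simps)
qed

definition scaled_cutoff :: "real \<Rightarrow> real \<Rightarrow> complex" where
  "scaled_cutoff e x = complex_cutoff (x / e + 1)"

lemma scaled_cutoff_affine: "scaled_cutoff e = (\<lambda>x. complex_cutoff ((1 / e) * x + 1))"
  by (simp add: scaled_cutoff_def fun_eq_iff)

lemma smooth_scaled_cutoff: "smooth (scaled_cutoff e)"
  unfolding scaled_cutoff_affine by (intro smooth_affine smooth_complex_cutoff)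

lemma nderiv_scaled_cutoff:
  "nderiv k (scaled_cutoff e) x = of_real (1 / e) ^ k * nderiv k complex_cutoff (x / e + 1)"
  unfolding scaled_cutoff_affine nderiv_affine[OF smooth_complex_cutoff] by simp

lemma scaled_cutoff_eq_1: "e > 0 \<Longrightarrow> x \<ge> -e \<Longrightarrow> scaled_cutoff e x = 1"
  by (simp add: scaled_cutoff_def complex_cutoff_def cutoff_eq_1 field_simps)

lemma nderiv_scaled_cutoff_eq_0: "e > 0 \<Longrightarrow> x < -2 * e \<Longrightarrow> nderiv k (scaled_cutoff e) x = 0"
  by (simp add: nderiv_scaled_cutoff nderiv_complex_cutoff_eq_0 field_simps)

lemma norm_nderiv_scaled_cutoff_le:
  assumes "e > 0" "\<And>y. norm (nderiv k complex_cutoff y) \<le> K"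
  shows "norm (nderiv k (scaled_cutoff e) x) \<le> (1 / e) ^ k * K"
  using assms(1) assms(2)[of "x / e + 1"]
  by (simp add: nderiv_scaled_cutoff norm_mult norm_power norm_divide mult_left_mono)

lemma schwartz_mult_scaled_cutoff:
  assumes "schwartz f" "e > 0"
  shows "schwartz (\<lambda>x. f x * scaled_cutoff e x)"
proof -
  have "\<forall>k. \<exists>K. \<forall>y. norm (nderiv k complex_cutoff y) \<le> K"
    using nderiv_complex_cutoff_bounded by blast
  then obtain K where "\<And>k y. norm (nderiv k complex_cutoff y) \<le> K k"
    by (auto simp: choice_iff)
  then show ?thesis
    using schwartz_mult[OF assms(1) smooth_scaled_cutoff norm_nderiv_scaled_cutoff_le[OF assms(2)]]
    by blast
qed

lemma supported_nonneg_eq_mult_scaled_cutoff: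
  assumes T: "tempered T" "supported_nonneg T" and f: "schwartz f"
    and left: "\<And>x. x \<le> -R \<Longrightarrow> f x = 0" and e: "e > 0"
  shows "T f = T (\<lambda>x. f x * scaled_cutoff e x)"
proof -
  define g where "g x = f x * scaled_cutoff e x" for x
  define h where "h x = f x - g x" for x
  have g: "schwartz g" unfolding g_def using f e by (rule schwartz_mult_scaled_cutoff)
  have h: "schwartz h" unfolding h_def using f g by (rule schwartz_diff)
  have "{x. h x \<noteq> 0} \<subseteq> {-R..-e}"
  proof
    fix x assume "x \<in> {x. h x \<noteq> 0}"
    then have "f x \<noteq> 0" "scaled_cutoff e x \<noteq> 1" by (auto simp: h_def g_def)
    then show "x \<in> {-R..-e}" using left[of x] scaled_cutoff_eq_1[OF e, of x] by force
  qed
  then have supp: "closure {x. h x \<noteq> 0} \<subseteq> {-R..-e}"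
    by (rule closure_minimal) simp
  have "compact ({-R..-e} \<inter> closure {x. h x \<noteq> 0})"
    by (intro compact_Int_closed) auto
  then have "compact (closure {x. h x \<noteq> 0})" using supp by (simp add: Int_absorb1)
  moreover have "closure {x. h x \<noteq> 0} \<subseteq> {..<0}" using supp e by auto
  ultimately have "T h = 0" using T(2) h unfolding supported_nonneg_def by blast
  moreover have "f = (\<lambda>x. h x + g x)" by (simp add: h_def)
  then have "T f = T h + T g" using T(1) h g unfolding tempered_def by simp
  ultimately show ?thesis by (simp add: g_def[abs_def])
qed

lemma norm_flat_times_nderiv_scaled_cutoff_le:
  assumes f: "smooth f" and vanish: "\<And>x. x \<ge> 0 \<Longrightarrow> f x = 0"
    and M: "\<And>n y. n \<le> 2 * N + 1 \<Longrightarrow> norm (nderiv n f y) \<le> M"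
    and K: "\<And>l y. l \<le> N \<Longrightarrow> norm (nderiv l complex_cutoff y) \<le> K"
    and e: "0 < e" "e \<le> 1" and x: "-2 * e \<le> x" "x \<le> 0" and il: "i \<le> N" "l \<le> N"
  shows "norm (nderiv i f x * nderiv l (scaled_cutoff e) x) \<le> 2 ^ (N + 1) * M * K * e"
proof -
  have M0: "M \<ge> 0" using order_trans[OF norm_ge_zero M[of 0 0]] by simp
  have K0: "K \<ge> 0" using order_trans[OF norm_ge_zero K[of 0 0]] by simp
  have "norm (nderiv i f x) \<le> M * \<bar>x\<bar> ^ (N + 1)"
    using il by (intro norm_nderiv_flat_le[OF f vanish _ x(2)] M) auto
  also have "\<dots> \<le> M * (2 * e) ^ (N + 1)"
    using x M0 by (intro mult_left_mono power_mono) auto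
  finally have nf: "norm (nderiv i f x) \<le> M * (2 * e) ^ (N + 1)" .
  have nc: "norm (nderiv l (scaled_cutoff e) x) \<le> (1 / e) ^ l * K"
    using il by (intro norm_nderiv_scaled_cutoff_le e K)
  have "norm (nderiv i f x * nderiv l (scaled_cutoff e) x) \<le> M * (2 * e) ^ (N + 1) * ((1 / e) ^ l * K)"
    unfolding norm_mult using nf nc M0 e by (intro mult_mono) auto
  also have "\<dots> = 2 ^ (N + 1) * M * K * (e ^ (N + 1) * (1 / e) ^ l)"
    by (simp add: power_mult_distrib)
  also have "e ^ (N + 1) * (1 / e) ^ l = e ^ (N + 1 - l)"
    using e il by (simp add: power_diff power_one_over field_simps)
  also have "\<dots> \<le> e ^ 1"
    using e il by (intro power_decreasing) auto
  finally show ?thesis using M0 K0 by (simp add: mult_left_mono)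
qed

lemma seminorm_flat_times_scaled_cutoff_le:
  assumes f: "smooth f" and vanish: "\<And>x. x \<ge> 0 \<Longrightarrow> f x = 0"
    and M: "\<And>n y. n \<le> 2 * N + 1 \<Longrightarrow> norm (nderiv n f y) \<le> M"
    and K: "\<And>l y. l \<le> N \<Longrightarrow> norm (nderiv l complex_cutoff y) \<le> K"
    and e: "0 < e" "e \<le> 1" and jk: "j \<le> N" "k \<le> N"
  shows "(1 + \<bar>x\<bar>) ^ j * norm (nderiv k (\<lambda>x. f x * scaled_cutoff e x) x)
           \<le> 6 ^ N * 2 ^ (N + 1) * M * K * e"
proof -
  let ?t = "2 ^ (N + 1) * M * K * e"
  have t0: "0 \<le> ?t"
    using e order_trans[OF norm_ge_zero M[of 0 0]] order_trans[OF norm_ge_zero K[of 0 0]] by simp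
  then have W0: "0 \<le> 6 ^ N * ?t" by simp
  have expand: "nderiv k (\<lambda>x. f x * scaled_cutoff e x) x =
      (\<Sum>i = 0..k. of_nat (k choose i) * nderiv i f x * nderiv (k - i) (scaled_cutoff e) x)"
    by (simp add: nderiv_mult[OF f smooth_scaled_cutoff])
  consider "x \<ge> 0" | "x < -2 * e" | "-2 * e \<le> x" "x < 0" by linarith
  then show ?thesis
  proof cases
    case 1
    then show ?thesis using W0 by (simp add: expand nderiv_eq_0_if_vanishes_nonneg[OF f vanish])
  next
    case 2
    then show ?thesis using W0 e by (simp add: expand nderiv_scaled_cutoff_eq_0)
  next
    case 3
    have "norm (nderiv k (\<lambda>x. f x * scaled_cutoff e x) x) \<le>
        (\<Sum>i = 0..k. of_nat (k choose i) * norm (nderiv i f x * nderiv (k - i) (scaled_cutoff e) x))"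
      unfolding expand by (rule order_trans[OF norm_sum]) (simp add: norm_mult mult.assoc)
    also have "\<dots> \<le> (\<Sum>i = 0..k. of_nat (k choose i) * ?t)"
      using 3 jk
      by (intro sum_mono mult_left_mono norm_flat_times_nderiv_scaled_cutoff_le[OF f vanish M K e]) auto
    also have "\<dots> = 2 ^ k * ?t"
      by (simp flip: sum_distrib_right of_nat_sum add: atLeast0AtMost choose_row_sum)
    also have "\<dots> \<le> 2 ^ N * ?t"
      using jk t0 by (intro mult_right_mono power_increasing) auto
    finally have nk: "norm (nderiv k (\<lambda>x. f x * scaled_cutoff e x) x) \<le> 2 ^ N * ?t" .
    have "(1 + \<bar>x\<bar>) ^ j \<le> 3 ^ j" using 3 e by (intro power_mono) auto
    also have "\<dots> \<le> 3 ^ N" using jk by (intro power_increasing) auto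
    finally have "(1 + \<bar>x\<bar>) ^ j * norm (nderiv k (\<lambda>x. f x * scaled_cutoff e x) x) \<le> 3 ^ N * (2 ^ N * ?t)"
      using nk by (intro mult_mono) auto
    also have "3 ^ N * (2 ^ N * ?t) = 6 ^ N * ?t"
      by (simp only: mult.assoc[symmetric] power_mult_distrib[symmetric]) simp
    finally show ?thesis by (simp only: mult.assoc)
  qed
qed

lemma ex_common_bound:
  fixes P :: "nat \<Rightarrow> 'a \<Rightarrow> real"
  assumes "\<And>n. n \<le> N \<Longrightarrow> \<exists>B. \<forall>x. P n x \<le> B"
  shows "\<exists>B. \<forall>n\<le>N. \<forall>x. P n x \<le> B"
  using assms
proof (induction N)
  case (Suc N)
  obtain B where B: "\<forall>n\<le>N. \<forall>x. P n x \<le> B" using Suc by auto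
  obtain B' where B': "\<forall>x. P (Suc N) x \<le> B'" using Suc.prems by blast
  have "\<forall>n\<le>Suc N. \<forall>x. P n x \<le> max B B'"
    using B B' by (auto simp: le_Suc_eq le_max_iff_disj)
  then show ?case by blast
qed auto

lemma supported_nonneg_vanishes_flat:
  assumes T: "tempered T" "supported_nonneg T" and f: "schwartz f"
    and vanish: "\<And>x. x \<ge> 0 \<Longrightarrow> f x = 0" and left: "\<And>x. x \<le> -R \<Longrightarrow> f x = 0"
  shows "T f = 0"
proof -
  obtain C N where CN: "\<And>f B. schwartz f \<Longrightarrow>
      (\<forall>j\<le>N. \<forall>k\<le>N. \<forall>x. (1 + \<bar>x\<bar>) ^ j * norm (nderiv k f x) \<le> B) \<Longrightarrow> norm (T f) \<le> C * B"
    using T(1) unfolding tempered_def by blast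
  obtain Bf where "\<And>j k x. (1 + \<bar>x\<bar>) ^ j * norm (nderiv k f x) \<le> Bf j k"
    using schwartz_boundsE[OF f] by blast
  then have "\<exists>B. \<forall>y. norm (nderiv n f y) \<le> B" for n by (metis mult_1 power_0)
  then obtain M where M: "\<And>n y. n \<le> 2 * N + 1 \<Longrightarrow> norm (nderiv n f y) \<le> M"
    using ex_common_bound[of "2 * N + 1" "\<lambda>n y. norm (nderiv n f y)"] by blast
  obtain K where K: "\<And>l y. l \<le> N \<Longrightarrow> norm (nderiv l complex_cutoff y) \<le> K"
    using ex_common_bound[of N "\<lambda>l y. norm (nderiv l complex_cutoff y)"]
      nderiv_complex_cutoff_bounded by blast
  define W where "W = 6 ^ N * 2 ^ (N + 1) * M * K"
  have bound: "norm (T f) \<le> C * W * e" if e: "0 < e" "e \<le> 1" for e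
  proof -
    have "norm (T (\<lambda>x. f x * scaled_cutoff e x)) \<le> C * (W * e)"
      using seminorm_flat_times_scaled_cutoff_le[OF schwartz_smooth[OF f] vanish M K e]
      by (intro CN[OF schwartz_mult_scaled_cutoff[OF f e(1)]]) (simp add: W_def)
    then show ?thesis using supported_nonneg_eq_mult_scaled_cutoff[OF T f left e(1)] by (simp add: mult.assoc)
  qed
  have ev: "eventually (\<lambda>e. norm (T f) \<le> C * W * e) (at_right 0)"
    using eventually_at_right_real[OF zero_less_one] by (rule eventually_mono) (simp add: bound)
  have lim: "((\<lambda>e. C * W * e) \<longlongrightarrow> C * W * 0) (at_right 0)"
    by (intro tendsto_intros)
  have "norm (T f) \<le> C * W * 0"
    by (rule tendsto_le[OF trivial_limit_at_right_real lim tendsto_const ev])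
  then show ?thesis by simp
qed

section \<open>The finite part of \<open>exp (-x) / x\<close>\<close>

lemma set_integrable_lborel_if_absolutely_integrable:
  fixes f :: "real \<Rightarrow> real"
  assumes m: "(\<lambda>t. indicator A t *\<^sub>R f t) \<in> borel_measurable lborel"
    and a: "f absolutely_integrable_on A"
  shows "set_integrable lborel A f" "(LINT t:A|lborel. f t) = integral A f"
proof -
  show si: "set_integrable lborel A f"
    using a m unfolding set_integrable_def by (simp add: integrable_completion)
  show "(LINT t:A|lborel. f t) = integral A f"
    by (rule set_borel_integral_eq_integral(2)[OF si])
qed

lemma has_integral_Ici_iff_Ioi:
  fixes f :: "real \<Rightarrow> 'a::banach"
  shows "(f has_integral I) {a..} \<longleftrightarrow> (f has_integral I) {a<..}"
  by (rule has_integral_spike_set_eq; rule negligible_subset[of "{a}"]) auto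

lemma has_integral_Icc_iff_Ioc:
  fixes f :: "real \<Rightarrow> 'a::banach"
  shows "(f has_integral I) {a..b} \<longleftrightarrow> (f has_integral I) {a<..b}"
  by (rule has_integral_spike_set_eq; rule negligible_subset[of "{a}"]) auto

definition Gamma_kernel :: "real \<Rightarrow> real \<Rightarrow> real" where
  "Gamma_kernel s t = t powr (s - 1) / exp t"

lemma Gamma_kernel_lborel:
  assumes s: "s > 0"
  shows "set_integrable lborel {0<..} (Gamma_kernel s)"
    and "(LINT t:{0<..}|lborel. Gamma_kernel s t) = Gamma s"
proof -
  have h: "(Gamma_kernel s has_integral Gamma s) {0<..}"
    using Gamma_integral_real[OF s] by (simp add: Gamma_kernel_def[abs_def] has_integral_Ici_iff_Ioi)
  have a: "Gamma_kernel s absolutely_integrable_on {0<..}"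
    using h by (intro nonnegative_absolutely_integrable_1) (auto simp: integrable_on_def Gamma_kernel_def)
  have m: "(\<lambda>t. indicator {0<..} t *\<^sub>R Gamma_kernel s t) \<in> borel_measurable lborel"
    unfolding Gamma_kernel_def by measurable
  show "set_integrable lborel {0<..} (Gamma_kernel s)"
    using set_integrable_lborel_if_absolutely_integrable[OF m a] by simp
  show "(LINT t:{0<..}|lborel. Gamma_kernel s t) = Gamma s"
    using set_integrable_lborel_if_absolutely_integrable[OF m a] h by (simp add: integral_unique)
qed

lemma powr_lborel:
  fixes s :: real
  assumes s: "s > 0"
  shows "set_integrable lborel {0<..1} (\<lambda>t. t powr (s - 1))"
    and "(LINT t:{0<..1}|lborel. t powr (s - 1)) = 1 / s"
proof -
  have h: "((\<lambda>t. t powr (s - 1)) has_integral 1 / s) {0<..1}"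
    using has_integral_powr_from_0[of "s - 1" 1] s by (simp add: has_integral_Icc_iff_Ioc)
  have a: "(\<lambda>t. t powr (s - 1)) absolutely_integrable_on {0<..1}"
    using h by (intro nonnegative_absolutely_integrable_1) (auto simp: integrable_on_def)
  have m: "(\<lambda>t. indicator {0<..1} t *\<^sub>R (t powr (s - 1))) \<in> borel_measurable lborel"
    by measurable
  show "set_integrable lborel {0<..1} (\<lambda>t. t powr (s - 1))"
    using set_integrable_lborel_if_absolutely_integrable[OF m a] by simp
  show "(LINT t:{0<..1}|lborel. t powr (s - 1)) = 1 / s"
    using set_integrable_lborel_if_absolutely_integrable[OF m a] h by (simp add: integral_unique)
qed

lemma Gamma_minus_inverse_eq_integrals:
  assumes s: "s > 0"
  shows "(LINT t:{0<..1}|lborel. Gamma_kernel s t - t powr (s - 1))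
           + (LINT t:{1<..}|lborel. Gamma_kernel s t) = Gamma s - 1 / s"
proof -
  note G = Gamma_kernel_lborel[OF s]
  have head: "set_integrable lborel {0<..1} (Gamma_kernel s)"
    by (rule set_integrable_subset[OF G(1)]) auto
  have tail: "set_integrable lborel {1<..} (Gamma_kernel s)"
    by (rule set_integrable_subset[OF G(1)]) auto
  have "Gamma s = (LINT t:{0<..1} \<union> {1<..}|lborel. Gamma_kernel s t)"
    using G(2) by (simp add: ivl_disj_un)
  also have "\<dots> = (LINT t:{0<..1}|lborel. Gamma_kernel s t) + (LINT t:{1<..}|lborel. Gamma_kernel s t)"
    by (rule set_integral_Un[OF _ head tail]) auto
  also have "(LINT t:{0<..1}|lborel. Gamma_kernel s t) =
      (LINT t:{0<..1}|lborel. Gamma_kernel s t - t powr (s - 1)) + 1 / s"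
    using set_integral_diff(2)[OF head powr_lborel(1)[OF s]] powr_lborel(2)[OF s] by simp
  finally show ?thesis by simp
qed

lemma norm_Gamma_kernel_compensated_le:
  assumes "0 < s" "s \<le> 1" "0 < t" "t \<le> 1"
  shows "norm (Gamma_kernel s t - t powr (s - 1)) \<le> 1"
proof -
  have e: "1 - 1 / exp t \<le> t" "1 / exp t \<le> 1"
    using exp_ge_add_one_self[of "-t"] assms by (auto simp: exp_minus field_simps)
  have "Gamma_kernel s t - t powr (s - 1) = - (t powr (s - 1) * (1 - 1 / exp t))"
    by (simp add: Gamma_kernel_def algebra_simps)
  moreover have "0 \<le> t powr (s - 1) * (1 - 1 / exp t)" using e by simp
  ultimately have "norm (Gamma_kernel s t - t powr (s - 1)) = t powr (s - 1) * (1 - 1 / exp t)"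
    by simp
  also have "\<dots> \<le> t powr (s - 1) * t" using e by (intro mult_left_mono) auto
  also have "\<dots> = t powr s" using assms by (simp add: powr_diff)
  also have "\<dots> \<le> 1" using assms by (intro powr_le1) auto
  finally show ?thesis .
qed

lemma norm_Gamma_kernel_le:
  assumes "s \<le> 1" "1 < t"
  shows "norm (Gamma_kernel s t) \<le> Gamma_kernel 1 t"
proof -
  have "t powr (s - 1) \<le> t powr (1 - 1)" using assms by (intro powr_mono) auto
  then show ?thesis using assms by (simp add: Gamma_kernel_def divide_right_mono)
qed

lemma tendsto_integral_Gamma_kernel_compensated:
  assumes s: "\<And>n. s n \<in> {0<..1}" "s \<longlonglongrightarrow> 0"
  shows "(\<lambda>n. LINT t:{0<..1}|lborel. Gamma_kernel (s n) t - t powr (s n - 1))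
           \<longlonglongrightarrow> (LINT t:{0<..1}|lborel. Gamma_kernel 0 t - t powr (0 - 1))"
  unfolding set_lebesgue_integral_def
proof (rule integral_dominated_convergence[where w = "indicator {0<..1}"])
  show "AE t in lborel. (\<lambda>n. indicator {0<..1} t *\<^sub>R (Gamma_kernel (s n) t - t powr (s n - 1)))
      \<longlonglongrightarrow> indicator {0<..1} t *\<^sub>R (Gamma_kernel 0 t - t powr (0 - 1))"
  proof (rule AE_I2)
    fix t :: real
    show "(\<lambda>n. indicator {0<..1} t *\<^sub>R (Gamma_kernel (s n) t - t powr (s n - 1)))
        \<longlonglongrightarrow> indicator {0<..1} t *\<^sub>R (Gamma_kernel 0 t - t powr (0 - 1))"
    proof (cases "t \<in> {0<..1}")
      case True
      then have "(\<lambda>n. t powr (s n - 1)) \<longlonglongrightarrow> t powr (0 - 1)"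
        by (intro tendsto_powr tendsto_diff s(2) tendsto_const) auto
      then have "(\<lambda>n. Gamma_kernel (s n) t - t powr (s n - 1)) \<longlonglongrightarrow> Gamma_kernel 0 t - t powr (0 - 1)"
        unfolding Gamma_kernel_def by (intro tendsto_diff tendsto_divide tendsto_const) auto
      then show ?thesis using True by simp
    qed simp
  qed
  show "AE t in lborel. norm (indicator {0<..1} t *\<^sub>R (Gamma_kernel (s n) t - t powr (s n - 1)))
      \<le> indicator {0<..1} t" for n
    using norm_Gamma_kernel_compensated_le s(1)[of n] by (intro AE_I2) (auto simp: indicator_def)
qed (auto simp: Gamma_kernel_def)

lemma tendsto_integral_Gamma_kernel_tail:
  assumes s: "\<And>n. s n \<in> {0<..1}" "s \<longlonglongrightarrow> 0"
  shows "(\<lambda>n. LINT t:{1<..}|lborel. Gamma_kernel (s n) t) \<longlonglongrightarrow> (LINT t:{1<..}|lborel. Gamma_kernel 0 t)"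
  unfolding set_lebesgue_integral_def
proof (rule integral_dominated_convergence[where w = "\<lambda>t. indicator {1<..} t *\<^sub>R Gamma_kernel 1 t"])
  show "integrable lborel (\<lambda>t. indicator {1<..} t *\<^sub>R Gamma_kernel 1 t)"
    using set_integrable_subset[OF Gamma_kernel_lborel(1)[of 1]] unfolding set_integrable_def by auto
  show "AE t in lborel. (\<lambda>n. indicator {1<..} t *\<^sub>R Gamma_kernel (s n) t)
      \<longlonglongrightarrow> indicator {1<..} t *\<^sub>R Gamma_kernel 0 t"
  proof (rule AE_I2)
    fix t :: real
    show "(\<lambda>n. indicator {1<..} t *\<^sub>R Gamma_kernel (s n) t) \<longlonglongrightarrow> indicator {1<..} t *\<^sub>R Gamma_kernel 0 t"
    proof (cases "t \<in> {1<..}")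
      case True
      then have "(\<lambda>n. t powr (s n - 1)) \<longlonglongrightarrow> t powr (0 - 1)"
        by (intro tendsto_powr tendsto_diff s(2) tendsto_const) auto
      then have "(\<lambda>n. Gamma_kernel (s n) t) \<longlonglongrightarrow> Gamma_kernel 0 t"
        unfolding Gamma_kernel_def by (intro tendsto_divide tendsto_const) auto
      then show ?thesis using True by simp
    qed simp
  qed
  show "AE t in lborel. norm (indicator {1<..} t *\<^sub>R Gamma_kernel (s n) t)
      \<le> indicator {1<..} t *\<^sub>R Gamma_kernel 1 t" for n
    using norm_Gamma_kernel_le s(1)[of n] by (intro AE_I2) (auto simp: indicator_def)
qed (auto simp: Gamma_kernel_def)

lemma tendsto_Gamma_minus_inverse: "((\<lambda>s. Gamma s - 1 / s) \<longlongrightarrow> - euler_mascheroni) (at_right (0::real))"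
proof -
  have "(Gamma has_field_derivative Gamma 1 * Digamma 1) (at (1::real))"
    by (rule has_field_derivative_Gamma) auto
  then have "((\<lambda>y. (Gamma y - Gamma 1) / (y - 1)) \<longlongrightarrow> - euler_mascheroni) (at (1::real))"
    by (simp add: has_field_derivative_iff)
  then have "((\<lambda>s. (Gamma (1 + s) - Gamma 1) / (1 + s - 1)) \<longlongrightarrow> - euler_mascheroni) (at (0::real))"
    by (rule LIM_offset_zero)
  then have "((\<lambda>s. (Gamma (1 + s) - Gamma 1) / (1 + s - 1)) \<longlongrightarrow> - euler_mascheroni) (at_right (0::real))"
    using filterlim_at_split by blast
  then show ?thesis
  proof (rule Lim_transform_eventually)
    show "\<forall>\<^sub>F s in at_right 0. (Gamma (1 + s) - Gamma 1) / (1 + s - 1) = Gamma s - 1 / (s::real)"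
      using eventually_at_right_real[OF zero_less_one]
    proof (rule eventually_mono)
      fix s :: real assume "s \<in> {0<..<1}"
      moreover have "Gamma (s + 1) = s * Gamma s" if "s > 0"
        using that by (intro Gamma_plus1) (auto elim!: nonpos_Ints_cases)
      ultimately show "(Gamma (1 + s) - Gamma 1) / (1 + s - 1) = Gamma s - 1 / s"
        by (simp add: field_simps)
    qed
  qed
qed

lemma integrals_Gamma_kernel_0:
  "(LINT t:{0<..1}|lborel. Gamma_kernel 0 t - t powr (0 - 1))
     + (LINT t:{1<..}|lborel. Gamma_kernel 0 t) = - euler_mascheroni"
proof -
  define s :: "nat \<Rightarrow> real" where "s n = 1 / (real n + 1)" for n
  have s: "s n \<in> {0<..1}" for n by (simp add: s_def field_simps)
  have s0: "s \<longlonglongrightarrow> 0"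
    unfolding s_def using LIMSEQ_inverse_real_of_nat by (simp add: inverse_eq_divide add.commute)
  have "(\<lambda>n. (LINT t:{0<..1}|lborel. Gamma_kernel (s n) t - t powr (s n - 1))
        + (LINT t:{1<..}|lborel. Gamma_kernel (s n) t))
      \<longlonglongrightarrow> (LINT t:{0<..1}|lborel. Gamma_kernel 0 t - t powr (0 - 1))
        + (LINT t:{1<..}|lborel. Gamma_kernel 0 t)"
    using s s0 by (intro tendsto_add tendsto_integral_Gamma_kernel_compensated tendsto_integral_Gamma_kernel_tail)
  moreover have "filterlim s (at_right 0) sequentially"
    using s s0 by (intro tendsto_imp_filterlim_at_right) auto
  then have "(\<lambda>n. Gamma (s n) - 1 / s n) \<longlonglongrightarrow> - euler_mascheroni"
    by (rule filterlim_compose[OF tendsto_Gamma_minus_inverse])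
  ultimately show ?thesis
    using s by (simp add: Gamma_minus_inverse_eq_integrals LIMSEQ_unique)
qed

section \<open>The Laplace transform as a dilation\<close>

definition cutoff_exp :: "real \<Rightarrow> complex" where
  "cutoff_exp x = complex_of_real (cutoff x * exp (- x))"

lemma cutoff_exp_0: "cutoff_exp 0 = 1"
  by (simp add: cutoff_exp_def cutoff_eq_1)

lemma pf_H_over_x_cutoff_exp: "pf_H_over_x cutoff_exp = - euler_mascheroni"
proof -
  have head: "(LINT x:{0<..1}|lborel. (cutoff_exp x - cutoff_exp 0) / complex_of_real x)
      = (LINT x:{0<..1}|lborel. complex_of_real (Gamma_kernel 0 x - x powr (0 - 1)))"
    by (rule set_lebesgue_integral_cong)
       (auto simp: cutoff_exp_def cutoff_eq_1 Gamma_kernel_def exp_minus powr_minus field_simps)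
  have tail: "(LINT x:{1..}|lborel. cutoff_exp x / complex_of_real x)
      = (LINT x:{1..}|lborel. complex_of_real (Gamma_kernel 0 x))"
    by (rule set_lebesgue_integral_cong)
       (auto simp: cutoff_exp_def cutoff_eq_1 Gamma_kernel_def exp_minus powr_minus field_simps)
  have "(LINT x:{1..}|lborel. Gamma_kernel 0 x) = (LINT x:{1<..}|lborel. Gamma_kernel 0 x)"
    unfolding set_lebesgue_integral_def
  proof (rule integral_cong_AE)
    show "AE x in lborel. indicator {1..} x *\<^sub>R Gamma_kernel 0 x = indicator {1<..} x *\<^sub>R Gamma_kernel 0 x"
      using AE_lborel_singleton[of 1] by (rule eventually_mono) (auto simp: indicator_def)
  qed (simp_all add: Gamma_kernel_def)
  then show ?thesis
    unfolding pf_H_over_x_def head tail set_integral_complex_of_real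
    using arg_cong[OF integrals_Gamma_kernel_0, of complex_of_real] by simp
qed

lemma smooth_cutoff_mult_exp: "smooth (\<lambda>x. complex_of_real (cutoff x * exp (c * x)))"
  using smooth_mult[OF smooth_complex_cutoff smooth_exp[of c]] by (simp add: complex_cutoff_def)

lemma schwartz_cutoff_exp: "schwartz cutoff_exp"
proof (rule schwartz_exp_tail[of _ 1 "-1" 0])
  show "smooth cutoff_exp"
    using smooth_cutoff_mult_exp[of "- 1"] by (simp add: cutoff_exp_def[abs_def])
qed (auto simp: cutoff_exp_def cutoff_eq_0 cutoff_eq_1)

lemma laplace_eq_dilate:
  assumes g: "tempered g" "supported_nonneg g" and l: "l > 0"
  shows "laplace g (1 / l) = complex_of_real l * dilate g l cutoff_exp"
proof -
  define F where "F x = complex_of_real (cutoff x * exp (- (1 / l) * x))" for x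
  define G where "G x = cutoff_exp (x / l)" for x
  have F: "schwartz F"
  proof (rule schwartz_exp_tail[of _ "1 / l" "-1" 0])
    show "smooth F" unfolding F_def[abs_def] by (rule smooth_cutoff_mult_exp)
  qed (use l in \<open>auto simp: F_def cutoff_eq_0 cutoff_eq_1\<close>)
  have G: "schwartz G"
  proof (rule schwartz_exp_tail[of _ "1 / l" "-l" 0])
    have "G = (\<lambda>x. cutoff_exp ((1 / l) * x + 0))" by (auto simp: G_def fun_eq_iff)
    then show "smooth G"
      using smooth_affine[OF schwartz_smooth[OF schwartz_cutoff_exp], of "1 / l" 0] by simp
  qed (use l in \<open>auto simp: G_def cutoff_exp_def cutoff_eq_0 cutoff_eq_1 field_simps\<close>)
  have "g (\<lambda>x. F x - G x) = 0"
  proof (rule supported_nonneg_vanishes_flat[OF g schwartz_diff[OF F G], of "max 1 l"])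
    show "F x - G x = 0" if "x \<ge> 0" for x
      using that l by (simp add: F_def G_def cutoff_exp_def cutoff_eq_1)
    show "F x - G x = 0" if "x \<le> - max 1 l" for x
      using that l by (simp add: F_def G_def cutoff_exp_def cutoff_eq_0 field_simps)
  qed
  moreover have "g (\<lambda>x. G x + (F x - G x)) = g G + g (\<lambda>x. F x - G x)"
    using g(1) G schwartz_diff[OF F G] unfolding tempered_def by blast
  ultimately have "g F = g G" by simp
  then show ?thesis
    using l by (simp add: laplace_def dilate_def F_def[abs_def] G_def[abs_def])
qed

theorem theorem3p1:
  fixes g :: "(real \<Rightarrow> complex) \<Rightarrow> complex" and a b :: complex
  assumes "tempered g"
    and "supported_nonneg g"
    and "\<forall>f. schwartz f \<longrightarrow>
           ((\<lambda>l. complex_of_real l *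
               (dilate g l f
                - (a / complex_of_real l * dirac f
                   + b * complex_of_real (ln l / l) * dirac f
                   + b / complex_of_real l * pf_H_over_x f)))
            \<longlongrightarrow> 0) at_top"
  shows "((\<lambda>y. laplace g y - (a - b * euler_mascheroni + b * complex_of_real (ln (1 / y))))
           \<longlongrightarrow> 0) (at_right 0)"
proof -
  define H where "H l = laplace g (1 / l) - (a - b * euler_mascheroni + b * complex_of_real (ln l))"
    for l
  have "((\<lambda>l. complex_of_real l *
      (dilate g l cutoff_exp - (a / complex_of_real l * dirac cutoff_exp
        + b * complex_of_real (ln l / l) * dirac cutoff_exp
        + b / complex_of_real l * pf_H_over_x cutoff_exp))) \<longlongrightarrow> 0) at_top"
    (is "(?R \<longlongrightarrow> 0) at_top")
    using assms(3) schwartz_cutoff_exp by blast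
  moreover have "eventually (\<lambda>l. ?R l = H l) at_top"
    using eventually_gt_at_top[of 0]
    by (rule eventually_mono)
       (simp add: H_def laplace_eq_dilate[OF assms(1,2)] dirac_def cutoff_exp_0
         pf_H_over_x_cutoff_exp field_simps)
  ultimately have "(H \<longlongrightarrow> 0) at_top"
    by (rule Lim_transform_eventually)
  then have "((\<lambda>y. H (1 / y)) \<longlongrightarrow> 0) (at_right 0)"
    by (rule filterlim_compose)
       (use filterlim_inverse_at_top_right in \<open>simp add: inverse_eq_divide\<close>)
  then show ?thesis by (simp add: H_def)
qed
end
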